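(* Let $T:\mathbb{R}^{M}\times\cdots\times\mathbb{R}^{M}\to\mathbb{R}^D$ ($N$ factors) be a real $N$-linear map with coefficients $T_{i,s}$, $i\in\{1,\dots,D\}$, $s\in\{1,\dots,M\}^N$, which is norm-preserving: $\big\|T(a^{(1)},\dots,a^{(N)})\big\|=\prod_{k=1}^N\|a^{(k)}\|$ for all $a^{(k)}\in\mathbb{R}^M$, where $T(a^{(1)},\dots,a^{(N)})_i=\sum_s T_{i,s}\prod_k a^{(k)}_{s_k}$ and $\|\cdot\|$ is the Euclidean norm. Let $\rho$ be a density operator on $\mathcal{H}_1\otimes\cdots\otimes\mathcal{H}_N$ which has positive partial transpose with respect to all bipartitions, i.e. $\rho^{T_\tau}\ge 0$ for every subset $\tau\subseteq\{1,\dots,N\}$. Then for all Hermitian operators $A^{(k)}_j$ on $\mathcal{H}_k$ ($k=1,\dots,N$, $j=1,\dots,M$), $$\sum_{i=1}^D\Big(\sum_{s}T_{i,s}\,\mathrm{tr}\big[\rho\,A^{(1)}_{s_1}\otimes\cdots\otimes A^{(N)}_{s_N}\big]\Big)^2\le\sum_{s}\mathrm{tr}\big[\rho\,(A^{(1)}_{s_1})^2\otimes\cdots\otimes(A^{(N)}_{s_N})^2\big].$$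
   Context: $\mathcal{H}_1,\dots,\mathcal{H}_N$ are finite-dimensional complex Hilbert spaces, each with a fixed orthonormal basis; for $\tau\subseteq\{1,\dots,N\}$, $\rho^{T_\tau}$ denotes the partial transpose of $\rho$ with respect to the tensor factors in $\tau$ (in these bases). A density operator is a positive semidefinite operator of trace one. *)

theory Defs
  imports Complex_Main "HOL-Library.FuncSet"
begin

text \<open>Multi-indices for the composite space H_1 x ... x H_N (0-based): functions
  x with x k < d k for k < N (extensional outside {..<N}).  Operators are matrices
  in the fixed product basis, i.e. functions of two basis indices.\<close>

definition mindex :: "nat \<Rightarrow> (nat \<Rightarrow> nat) \<Rightarrow> (nat \<Rightarrow> nat) set" where
  "mindex N d = PiE {..<N} (\<lambda>k. {..<d k})"

definition hermitian_on :: "'i set \<Rightarrow> ('i \<Rightarrow> 'i \<Rightarrow> complex) \<Rightarrow> bool" where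
  "hermitian_on I A \<longleftrightarrow> (\<forall>x\<in>I. \<forall>y\<in>I. A x y = cnj (A y x))"

definition psd_on :: "'i set \<Rightarrow> ('i \<Rightarrow> 'i \<Rightarrow> complex) \<Rightarrow> bool" where
  "psd_on I A \<longleftrightarrow> hermitian_on I A \<and>
     (\<forall>v. let q = (\<Sum>x\<in>I. \<Sum>y\<in>I. cnj (v x) * A x y * v y) in Im q = 0 \<and> Re q \<ge> 0)"

definition density_on :: "'i set \<Rightarrow> ('i \<Rightarrow> 'i \<Rightarrow> complex) \<Rightarrow> bool" where
  "density_on I \<rho> \<longleftrightarrow> psd_on I \<rho> \<and> (\<Sum>x\<in>I. \<rho> x x) = 1"

definition partial_transpose ::
  "nat set \<Rightarrow> ((nat \<Rightarrow> nat) \<Rightarrow> (nat \<Rightarrow> nat) \<Rightarrow> complex) \<Rightarrow> (nat \<Rightarrow> nat) \<Rightarrow> (nat \<Rightarrow> nat) \<Rightarrow> complex" where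
  "partial_transpose \<tau> \<rho> x y =
     \<rho> (\<lambda>k. if k \<in> \<tau> then y k else x k) (\<lambda>k. if k \<in> \<tau> then x k else y k)"

definition tensor_op :: "nat \<Rightarrow> (nat \<Rightarrow> nat \<Rightarrow> nat \<Rightarrow> complex) \<Rightarrow> (nat \<Rightarrow> nat) \<Rightarrow> (nat \<Rightarrow> nat) \<Rightarrow> complex" where
  "tensor_op N B x y = (\<Prod>k<N. B k (x k) (y k))"

definition mat_sq :: "nat \<Rightarrow> (nat \<Rightarrow> nat \<Rightarrow> complex) \<Rightarrow> nat \<Rightarrow> nat \<Rightarrow> complex" where
  "mat_sq n A a b = (\<Sum>c<n. A a c * A c b)"

definition trace_prod :: "'i set \<Rightarrow> ('i \<Rightarrow> 'i \<Rightarrow> complex) \<Rightarrow> ('i \<Rightarrow> 'i \<Rightarrow> complex) \<Rightarrow> complex" where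
  "trace_prod I \<rho> X = (\<Sum>x\<in>I. \<Sum>y\<in>I. \<rho> x y * X y x)"

definition multilin_apply :: "nat \<Rightarrow> nat \<Rightarrow> (nat \<Rightarrow> (nat \<Rightarrow> nat) \<Rightarrow> real) \<Rightarrow> (nat \<Rightarrow> nat \<Rightarrow> real) \<Rightarrow> nat \<Rightarrow> real" where
  "multilin_apply N M T a i = (\<Sum>s\<in>mindex N (\<lambda>_. M). T i s * (\<Prod>k<N. a k (s k)))"

definition norm_preserving :: "nat \<Rightarrow> nat \<Rightarrow> nat \<Rightarrow> (nat \<Rightarrow> (nat \<Rightarrow> nat) \<Rightarrow> real) \<Rightarrow> bool" where
  "norm_preserving N M D T \<longleftrightarrow>
     (\<forall>a :: nat \<Rightarrow> nat \<Rightarrow> real.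
        sqrt (\<Sum>i<D. (multilin_apply N M T a i)\<^sup>2) = (\<Prod>k<N. sqrt (\<Sum>j<M. (a k j)\<^sup>2)))"

end

theory Submission
  imports Defs
begin

text \<open>
  Fix a subset tau of the parties and put sigma = rho^{T_tau}, a state by the PPT hypothesis.
  Let B_s be the product observable with factors A^{(k)}_{s_k}, transposed for k in tau, so that
  tr[sigma B_s] = tr[rho A_s].  The variance inequality (tr[sigma Y])^2 <= tr[sigma Y^2] for the
  Hermitian operators Y_i = sum_s T_{i,s} B_s, summed over i, bounds the left-hand side by
  sum_{s,t} G_{s,t} tr[sigma B_s B_t] with the Gram matrix G = T^T T; undoing the partial transpose,
  tr[sigma B_s B_t] is a moment of rho in which the factors in tau are multiplied in reverse order.

  Averaging over all 2^N subsets tau symmetrizes every factor.  Polarizing the norm identity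
  |T(a^{(1)},...,a^{(N)})|^2 = prod_k |a^{(k)}|^2 shows that G acts as the identity on products of
  symmetric matrices,
    sum_{s,t} G_{s,t} prod_k (P_k(s_k,t_k) + P_k(t_k,s_k)) = 2^N sum_s prod_k P_k(s_k,s_k),
  and this turns the average into the right-hand side.
\<close>

lemma finite_mindex [simp]: "finite (mindex N d)"
  unfolding mindex_def by (simp add: finite_PiE)

lemma mindex_lessD: "x \<in> mindex N d \<Longrightarrow> k < N \<Longrightarrow> x k < d k"
  unfolding mindex_def by (auto simp: PiE_iff)

lemma mindex_eqI:
  assumes "p \<in> mindex N d" "q \<in> mindex N d" "\<forall>k<N. p k = q k"
  shows "p = q"
  using assms unfolding mindex_def by (auto intro: PiE_ext)

lemma prod_sum_mindex:
  fixes f :: "nat \<Rightarrow> nat \<Rightarrow> 'a :: comm_semiring_1"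
  shows "(\<Prod>k<N. \<Sum>j<d k. f k j) = (\<Sum>x\<in>mindex N d. \<Prod>k<N. f k (x k))"
  unfolding mindex_def by (rule prod_sum_PiE) auto

lemma prod_Pow_if:
  fixes f g :: "'a \<Rightarrow> 'c :: comm_semiring_1"
  assumes "finite K"
  shows "(\<Sum>X\<in>Pow K. \<Prod>k\<in>K. if k \<in> X then f k else g k) = (\<Prod>k\<in>K. f k + g k)"
proof -
  have "(\<Prod>k\<in>K. if k \<in> X then f k else g k) = prod f X * prod g (K - X)" if "X \<subseteq> K" for X
    using prod.If_cases[OF assms, of "\<lambda>k. k \<in> X" f g] that
    by (simp add: Int_absorb1 Diff_eq)
  then show ?thesis
    using prod_add[OF assms, of f g] by simp
qed

lemma sum_swap_pairs:
  "(\<Sum>a\<in>A. \<Sum>b\<in>B. \<Sum>c\<in>C. \<Sum>e\<in>E. f a b c e) = (\<Sum>c\<in>C. \<Sum>e\<in>E. \<Sum>a\<in>A. \<Sum>b\<in>B. f a b c e)"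
proof -
  have "(\<Sum>a\<in>A. \<Sum>b\<in>B. \<Sum>c\<in>C. \<Sum>e\<in>E. f a b c e) = (\<Sum>a\<in>A. \<Sum>c\<in>C. \<Sum>b\<in>B. \<Sum>e\<in>E. f a b c e)"
    by (intro sum.cong refl sum.swap)
  also have "\<dots> = (\<Sum>c\<in>C. \<Sum>a\<in>A. \<Sum>b\<in>B. \<Sum>e\<in>E. f a b c e)"
    by (rule sum.swap)
  also have "\<dots> = (\<Sum>c\<in>C. \<Sum>e\<in>E. \<Sum>a\<in>A. \<Sum>b\<in>B. f a b c e)"
    by (intro sum.cong refl) (subst sum.swap, intro sum.cong refl sum.swap)
  finally show ?thesis .
qed

lemma sum_of_bool_mult_of_bool:
  "b < M \<Longrightarrow> (\<Sum>j<M. of_bool (j = a) * of_bool (j = b) :: 'a :: semiring_1) = of_bool (a = b)"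
  for M :: nat by (cases "a = b") auto

lemma double_sum_delta:
  fixes P :: "nat \<Rightarrow> nat \<Rightarrow> 'a :: comm_ring_1"
  assumes "u < M" "v < M"
  shows "(\<Sum>a<M. \<Sum>b<M. if a = u \<and> b = v then P a b else 0) = P u v"
proof -
  have "(\<Sum>b<M. if a = u \<and> b = v then P a b else 0) = (if a = u then P a v else 0)" for a
    using assms by (cases "a = u") simp_all
  then show ?thesis using assms by simp
qed

section \<open>The Gram matrix of a norm-preserving multilinear map\<close>

definition gram :: "nat \<Rightarrow> (nat \<Rightarrow> 'a \<Rightarrow> real) \<Rightarrow> 'a \<Rightarrow> 'a \<Rightarrow> real" where
  "gram D T s t = (\<Sum>i<D. T i s * T i t)"

lemma norm_preserving_gram_form:
  assumes "norm_preserving N M D T"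
  shows "(\<Sum>s\<in>mindex N (\<lambda>_. M). \<Sum>t\<in>mindex N (\<lambda>_. M).
            gram D T s t * ((\<Prod>k<N. a k (s k)) * (\<Prod>k<N. a k (t k))))
         = (\<Prod>k<N. \<Sum>j<M. (a k j)\<^sup>2)"
proof -
  let ?S = "mindex N (\<lambda>_. M)"
  let ?a = "\<lambda>s. \<Prod>k<N. a k (s k)"
  have "(\<Prod>k<N. sqrt (\<Sum>j<M. (a k j)\<^sup>2)) = sqrt (\<Prod>k<N. \<Sum>j<M. (a k j)\<^sup>2)"
    by (induction N) (simp_all add: real_sqrt_mult)
  with assms have "(\<Sum>i<D. (multilin_apply N M T a i)\<^sup>2) = (\<Prod>k<N. \<Sum>j<M. (a k j)\<^sup>2)"
    unfolding norm_preserving_def by (metis prod_nonneg real_sqrt_eq_iff sum_nonneg zero_le_power2)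
  moreover have "(\<Sum>i<D. (multilin_apply N M T a i)\<^sup>2)
      = (\<Sum>i<D. \<Sum>s\<in>?S. \<Sum>t\<in>?S. T i s * T i t * (?a s * ?a t))"
    unfolding multilin_apply_def power2_eq_square sum_product by (simp add: mult_ac)
  moreover have "\<dots> = (\<Sum>s\<in>?S. \<Sum>t\<in>?S. gram D T s t * (?a s * ?a t))"
    unfolding gram_def sum_distrib_right by (simp add: sum.swap[of _ "{..<D}"])
  ultimately show ?thesis by simp
qed

lemma norm_preserving_gram_polarized:
  assumes "norm_preserving N M D T"
  shows "(\<Sum>s\<in>mindex N (\<lambda>_. M). \<Sum>t\<in>mindex N (\<lambda>_. M).
            gram D T s t * (\<Prod>k<N. x k (s k) * y k (t k) + y k (s k) * x k (t k)))
         = 2 ^ N * (\<Prod>k<N. \<Sum>j<M. x k j * y k j)"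
proof -
  let ?S = "mindex N (\<lambda>_. M)"
  define r where "r X k j = (if k \<in> X then x k j + y k j else x k j - y k j)" for X :: "nat set" and k j
  define w where "w X = (\<Prod>k<N. if k \<in> X then 1 / 2 else - 1 / 2 :: real)" for X
  let ?r = "\<lambda>X s. \<Prod>k<N. r X k (s k)"
  have expand: "(\<Prod>k<N. x k (s k) * y k (t k) + y k (s k) * x k (t k))
      = (\<Sum>X\<in>Pow {..<N}. w X * (?r X s * ?r X t))" for s t
  proof -
    \<comment> \<open>per factor: \<open>x \<otimes> y + y \<otimes> x = ((x + y) \<otimes> (x + y) - (x - y) \<otimes> (x - y)) / 2\<close>\<close>
    have "(\<Prod>k<N. x k (s k) * y k (t k) + y k (s k) * x k (t k))
        = (\<Prod>k<N. r {k} k (s k) * r {k} k (t k) / 2 + - (r {} k (s k) * r {} k (t k)) / 2)"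
      by (rule prod.cong) (auto simp: r_def field_simps)
    also have "\<dots> = (\<Sum>X\<in>Pow {..<N}. \<Prod>k<N. if k \<in> X then r {k} k (s k) * r {k} k (t k) / 2
                                      else - (r {} k (s k) * r {} k (t k)) / 2)"
      by (rule prod_Pow_if[symmetric]) simp
    also have "\<dots> = (\<Sum>X\<in>Pow {..<N}. w X * (?r X s * ?r X t))"
      unfolding w_def prod.distrib[symmetric]
      by (intro sum.cong prod.cong refl) (auto simp: r_def)
    finally show ?thesis .
  qed
  have "(\<Sum>s\<in>?S. \<Sum>t\<in>?S. gram D T s t * (\<Prod>k<N. x k (s k) * y k (t k) + y k (s k) * x k (t k)))
      = (\<Sum>X\<in>Pow {..<N}. w X * (\<Sum>s\<in>?S. \<Sum>t\<in>?S. gram D T s t * (?r X s * ?r X t)))"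
    unfolding expand sum_distrib_left
    by (simp add: sum.swap[of _ "Pow {..<N}"] mult_ac)
  also have "\<dots> = (\<Sum>X\<in>Pow {..<N}. w X * (\<Prod>k<N. \<Sum>j<M. (r X k j)\<^sup>2))"
    using norm_preserving_gram_form[OF assms] by simp
  also have "\<dots> = (\<Sum>X\<in>Pow {..<N}. \<Prod>k<N. if k \<in> X then (\<Sum>j<M. (x k j + y k j)\<^sup>2) / 2
                                       else - (\<Sum>j<M. (x k j - y k j)\<^sup>2) / 2)"
    unfolding w_def prod.distrib[symmetric]
    by (intro sum.cong prod.cong refl) (auto simp: r_def)
  also have "\<dots> = (\<Prod>k<N. 2 * (\<Sum>j<M. x k j * y k j))"
    by (simp add: prod_Pow_if diff_divide_distrib[symmetric] sum_subtractf[symmetric]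
        sum_divide_distrib power2_eq_square algebra_simps sum_distrib_left)
  also have "\<dots> = 2 ^ N * (\<Prod>k<N. \<Sum>j<M. x k j * y k j)"
    by (simp add: prod.distrib)
  finally show ?thesis .
qed

definition sym_delta :: "nat \<Rightarrow> nat \<Rightarrow> nat \<Rightarrow> nat \<Rightarrow> real" where
  "sym_delta a b u v = of_bool (u = a \<and> v = b) + of_bool (u = b \<and> v = a)"

lemma norm_preserving_gram_sym_delta:
  assumes np: "norm_preserving N M D T"
    and p: "p \<in> mindex N (\<lambda>_. M)" and q: "q \<in> mindex N (\<lambda>_. M)"
  shows "(\<Sum>s\<in>mindex N (\<lambda>_. M). \<Sum>t\<in>mindex N (\<lambda>_. M).
            gram D T s t * (\<Prod>k<N. sym_delta (p k) (q k) (s k) (t k))) = 2 ^ N * of_bool (p = q)"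
proof -
  have "(\<Prod>k<N. \<Sum>j<M. of_bool (j = p k) * of_bool (j = q k)) = (\<Prod>k<N. of_bool (p k = q k) :: real)"
    using mindex_lessD[OF q] by (intro prod.cong refl sum_of_bool_mult_of_bool) auto
  also have "\<dots> = of_bool (p = q)"
    using mindex_eqI[OF p q] by (auto simp: prod_zero_iff)
  finally show ?thesis
    using norm_preserving_gram_polarized[OF np, of "\<lambda>k j. of_bool (j = p k)" "\<lambda>k j. of_bool (j = q k)"]
    by (simp add: sym_delta_def of_bool_conj)
qed

lemma sum_sym_delta:
  fixes P :: "nat \<Rightarrow> nat \<Rightarrow> 'a :: {comm_ring_1, real_algebra_1}"
  assumes "u < M" "v < M"
  shows "(\<Sum>a<M. \<Sum>b<M. P a b * of_real (sym_delta a b u v)) = P u v + P v u"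
proof -
  have "P a b * of_real (sym_delta a b u v)
      = (if a = u \<and> b = v then P a b else 0) + (if a = v \<and> b = u then P a b else 0)" for a b
    unfolding sym_delta_def by (cases "a = u"; cases "b = v"; cases "a = v"; cases "b = u") auto
  then have "(\<Sum>a<M. \<Sum>b<M. P a b * of_real (sym_delta a b u v))
      = (\<Sum>a<M. \<Sum>b<M. if a = u \<and> b = v then P a b else 0) + (\<Sum>a<M. \<Sum>b<M. if a = v \<and> b = u then P a b else 0)"
    by (simp only: sum.distrib)
  then show ?thesis using assms by (simp only: double_sum_delta)
qed

lemma norm_preserving_gram_symmetrized:
  fixes P :: "nat \<Rightarrow> nat \<Rightarrow> nat \<Rightarrow> 'a :: {comm_ring_1, real_algebra_1}"
  assumes np: "norm_preserving N M D T"
  shows "(\<Sum>s\<in>mindex N (\<lambda>_. M). \<Sum>t\<in>mindex N (\<lambda>_. M).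
            of_real (gram D T s t) * (\<Prod>k<N. P k (s k) (t k) + P k (t k) (s k)))
         = 2 ^ N * (\<Sum>s\<in>mindex N (\<lambda>_. M). \<Prod>k<N. P k (s k) (s k))"
proof -
  let ?S = "mindex N (\<lambda>_. M)"
  let ?P = "\<lambda>p q. \<Prod>k<N. P k (p k) (q k)"
  let ?\<delta> = "\<lambda>p q s t. \<Prod>k<N. sym_delta (p k) (q k) (s k) (t k)"
  \<comment> \<open>expand every factor in symmetrized matrix units\<close>
  have expand: "(\<Prod>k<N. P k (s k) (t k) + P k (t k) (s k))
      = (\<Sum>p\<in>?S. \<Sum>q\<in>?S. ?P p q * of_real (?\<delta> p q s t))" if "s \<in> ?S" "t \<in> ?S" for s t
  proof -
    have "(\<Prod>k<N. P k (s k) (t k) + P k (t k) (s k))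
        = (\<Prod>k<N. \<Sum>a<M. \<Sum>b<M. P k a b * of_real (sym_delta a b (s k) (t k)))"
    proof (rule prod.cong[OF refl])
      fix k assume "k \<in> {..<N}"
      then have "s k < M" "t k < M" using that by (auto dest: mindex_lessD)
      from sum_sym_delta[OF this, of "P k"]
      show "P k (s k) (t k) + P k (t k) (s k) = (\<Sum>a<M. \<Sum>b<M. P k a b * of_real (sym_delta a b (s k) (t k)))"
        by simp
    qed
    also have "\<dots> = (\<Sum>p\<in>?S. \<Sum>q\<in>?S. \<Prod>k<N. P k (p k) (q k) * of_real (sym_delta (p k) (q k) (s k) (t k)))"
      by (simp only: prod_sum_mindex)
    finally show ?thesis by (simp add: prod.distrib)
  qed
  have "(\<Sum>s\<in>?S. \<Sum>t\<in>?S. of_real (gram D T s t) * (\<Prod>k<N. P k (s k) (t k) + P k (t k) (s k)))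
      = (\<Sum>s\<in>?S. \<Sum>t\<in>?S. \<Sum>p\<in>?S. \<Sum>q\<in>?S. ?P p q * of_real (gram D T s t * ?\<delta> p q s t))"
    by (intro sum.cong refl) (simp add: expand sum_distrib_left mult_ac)
  also have "\<dots> = (\<Sum>p\<in>?S. \<Sum>q\<in>?S. \<Sum>s\<in>?S. \<Sum>t\<in>?S. ?P p q * of_real (gram D T s t * ?\<delta> p q s t))"
    by (rule sum_swap_pairs)
  also have "\<dots> = (\<Sum>p\<in>?S. \<Sum>q\<in>?S. ?P p q * of_real (\<Sum>s\<in>?S. \<Sum>t\<in>?S. gram D T s t * ?\<delta> p q s t))"
    by (simp add: sum_distrib_left of_real_sum)
  also have "\<dots> = (\<Sum>p\<in>?S. \<Sum>q\<in>?S. of_bool (p = q) * (2 ^ N * ?P p q))"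
    by (intro sum.cong refl) (simp add: norm_preserving_gram_sym_delta[OF np])
  also have "\<dots> = 2 ^ N * (\<Sum>s\<in>?S. ?P s s)"
    by (simp add: sum_distrib_left)
  finally show ?thesis .
qed

definition op_mult :: "'i set \<Rightarrow> ('i \<Rightarrow> 'i \<Rightarrow> complex) \<Rightarrow> ('i \<Rightarrow> 'i \<Rightarrow> complex) \<Rightarrow> 'i \<Rightarrow> 'i \<Rightarrow> complex"
  where "op_mult I P Q x y = (\<Sum>z\<in>I. P x z * Q z y)"

lemma mat_sq_eq_op_mult: "mat_sq n A = op_mult {..<n} A A"
  by (simp add: fun_eq_iff mat_sq_def op_mult_def)

lemma trace_prod_sum:
  "trace_prod I \<sigma> (\<lambda>x y. \<Sum>s\<in>S. F s x y) = (\<Sum>s\<in>S. trace_prod I \<sigma> (F s))"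
proof -
  have "trace_prod I \<sigma> (\<lambda>x y. \<Sum>s\<in>S. F s x y) = (\<Sum>x\<in>I. \<Sum>s\<in>S. \<Sum>y\<in>I. \<sigma> x y * F s y x)"
    unfolding trace_prod_def sum_distrib_left by (intro sum.cong refl sum.swap)
  also have "\<dots> = (\<Sum>s\<in>S. trace_prod I \<sigma> (F s))"
    unfolding trace_prod_def by (rule sum.swap)
  finally show ?thesis .
qed

lemma trace_prod_scale: "trace_prod I \<sigma> (\<lambda>x y. c * X x y) = c * trace_prod I \<sigma> X"
  unfolding trace_prod_def sum_distrib_left by (simp add: mult_ac)

lemma op_mult_lincomb:
  "op_mult I (\<lambda>x y. \<Sum>s\<in>S. c s * F s x y) (\<lambda>x y. \<Sum>t\<in>S. c t * F t x y)
   = (\<lambda>x y. \<Sum>s\<in>S. \<Sum>t\<in>S. (c s * c t) * op_mult I (F s) (F t) x y)"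
proof (intro ext)
  fix x y
  have "op_mult I (\<lambda>x y. \<Sum>s\<in>S. c s * F s x y) (\<lambda>x y. \<Sum>t\<in>S. c t * F t x y) x y
      = (\<Sum>z\<in>I. \<Sum>s\<in>S. \<Sum>t\<in>S. (c s * c t) * (F s x z * F t z y))"
    unfolding op_mult_def sum_product by (simp add: mult_ac)
  also have "\<dots> = (\<Sum>s\<in>S. \<Sum>t\<in>S. \<Sum>z\<in>I. (c s * c t) * (F s x z * F t z y))"
    by (subst sum.swap) (intro sum.cong refl sum.swap)
  also have "\<dots> = (\<Sum>s\<in>S. \<Sum>t\<in>S. (c s * c t) * op_mult I (F s) (F t) x y)"
    unfolding op_mult_def by (simp add: sum_distrib_left)
  finally show "op_mult I (\<lambda>x y. \<Sum>s\<in>S. c s * F s x y) (\<lambda>x y. \<Sum>t\<in>S. c t * F t x y) x y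
      = (\<Sum>s\<in>S. \<Sum>t\<in>S. (c s * c t) * op_mult I (F s) (F t) x y)" .
qed

lemma op_mult_tensor_op:
  "op_mult (mindex N d) (tensor_op N B) (tensor_op N C)
   = tensor_op N (\<lambda>k. op_mult {..<d k} (B k) (C k))"
  by (simp add: fun_eq_iff op_mult_def tensor_op_def prod.distrib prod_sum_mindex)

lemma hermitian_on_tensor_op:
  assumes "\<forall>k<N. hermitian_on {..<d k} (B k)"
  shows "hermitian_on (mindex N d) (tensor_op N B)"
  unfolding hermitian_on_def tensor_op_def cnj_prod
proof (intro ballI prod.cong[OF refl])
  fix x y k assume "x \<in> mindex N d" "y \<in> mindex N d" "k \<in> {..<N}"
  then have "x k < d k" "y k < d k" by (simp_all add: mindex_lessD)
  with assms \<open>k \<in> {..<N}\<close> show "B k (x k) (y k) = cnj (B k (y k) (x k))"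
    unfolding hermitian_on_def by blast
qed

lemma hermitian_on_lincomb:
  assumes "\<forall>s\<in>S. hermitian_on I (F s)"
  shows "hermitian_on I (\<lambda>x y. \<Sum>s\<in>S. of_real (c s) * F s x y)"
  unfolding hermitian_on_def cnj_sum
proof (intro ballI sum.cong[OF refl])
  fix x y s assume "x \<in> I" "y \<in> I" "s \<in> S"
  with assms have "F s x y = cnj (F s y x)"
    unfolding hermitian_on_def by blast
  then show "of_real (c s) * F s x y = cnj (of_real (c s) * F s y x)"
    by simp
qed

lemma psd_on_quadratic_form_nonneg:
  "psd_on I A \<Longrightarrow> 0 \<le> Re (\<Sum>x\<in>I. \<Sum>y\<in>I. cnj (v x) * A x y * v y)"
  unfolding psd_on_def Let_def by blast

lemma psd_trace_op_mult_self_nonneg: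
  assumes "psd_on I \<sigma>" and "hermitian_on I Z"
  shows "Re (trace_prod I \<sigma> (op_mult I Z Z)) \<ge> 0"
proof -
  let ?v = "\<lambda>c x. cnj (Z c x)"
  have "trace_prod I \<sigma> (op_mult I Z Z) = (\<Sum>x\<in>I. \<Sum>y\<in>I. \<Sum>c\<in>I. cnj (?v c x) * \<sigma> x y * ?v c y)"
    unfolding trace_prod_def op_mult_def sum_distrib_left
  proof (intro sum.cong refl)
    fix x y c assume "x \<in> I" "y \<in> I" "c \<in> I"
    with assms(2) have "Z y c = cnj (Z c y)"
      unfolding hermitian_on_def by blast
    then show "\<sigma> x y * (Z y c * Z c x) = cnj (?v c x) * \<sigma> x y * ?v c y"
      by simp
  qed
  also have "\<dots> = (\<Sum>x\<in>I. \<Sum>c\<in>I. \<Sum>y\<in>I. cnj (?v c x) * \<sigma> x y * ?v c y)"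
    by (intro sum.cong refl sum.swap)
  also have "\<dots> = (\<Sum>c\<in>I. \<Sum>x\<in>I. \<Sum>y\<in>I. cnj (?v c x) * \<sigma> x y * ?v c y)"
    by (rule sum.swap)
  finally have "Re (trace_prod I \<sigma> (op_mult I Z Z))
      = (\<Sum>c\<in>I. Re (\<Sum>x\<in>I. \<Sum>y\<in>I. cnj (?v c x) * \<sigma> x y * ?v c y))"
    by (metis Re_sum)
  also have "\<dots> \<ge> 0"
    using assms(1) by (intro sum_nonneg psd_on_quadratic_form_nonneg)
  finally show ?thesis .
qed

lemma trace_sq_le_trace_op_mult_self:
  assumes psd: "psd_on I \<sigma>" and tr: "(\<Sum>x\<in>I. \<sigma> x x) = 1"
    and herm: "hermitian_on I Y" and fin: "finite I"
  shows "(Re (trace_prod I \<sigma> Y))\<^sup>2 \<le> Re (trace_prod I \<sigma> (op_mult I Y Y))"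
proof -
  define l where "l = Re (trace_prod I \<sigma> Y)"
  define Z where "Z x y = Y x y - of_real l * of_bool (x = y)" for x y
  have "hermitian_on I Z"
    unfolding hermitian_on_def
  proof (intro ballI)
    fix x y assume "x \<in> I" "y \<in> I"
    with herm have "Y x y = cnj (Y y x)"
      unfolding hermitian_on_def by blast
    then show "Z x y = cnj (Z y x)"
      unfolding Z_def by auto
  qed
  have ZZ: "op_mult I Z Z y x = op_mult I Y Y y x - 2 * of_real l * Y y x + of_real (l\<^sup>2) * of_bool (y = x)"
    if "x \<in> I" "y \<in> I" for x y
  proof -
    have "op_mult I Z Z y x = op_mult I Y Y y x - of_real l * (\<Sum>z\<in>I. of_bool (y = z) * Y z x)
        - of_real l * (\<Sum>z\<in>I. Y y z * of_bool (z = x))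
        + of_real l * of_real l * (\<Sum>z\<in>I. of_bool (y = z) * of_bool (z = x))"
      unfolding op_mult_def Z_def
      by (simp add: algebra_simps sum.distrib sum_subtractf sum_distrib_left)
    also have "\<dots> = op_mult I Y Y y x - 2 * of_real l * Y y x + of_real (l\<^sup>2) * of_bool (y = x)"
      using that fin by (simp add: power2_eq_square)
    finally show ?thesis .
  qed
  have "trace_prod I \<sigma> (op_mult I Z Z)
      = trace_prod I \<sigma> (op_mult I Y Y) - 2 * of_real l * trace_prod I \<sigma> Y
        + of_real (l\<^sup>2) * (\<Sum>x\<in>I. \<Sum>y\<in>I. \<sigma> x y * of_bool (y = x))"
    unfolding trace_prod_def
    by (simp add: ZZ algebra_simps sum.distrib sum_subtractf sum_distrib_left cong: sum.cong)
  also have "(\<Sum>x\<in>I. \<Sum>y\<in>I. \<sigma> x y * of_bool (y = x)) = 1"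
    using tr fin by simp
  finally have "Re (trace_prod I \<sigma> (op_mult I Z Z)) = Re (trace_prod I \<sigma> (op_mult I Y Y)) - l\<^sup>2"
    by (simp add: tr l_def power2_eq_square)
  moreover have "Re (trace_prod I \<sigma> (op_mult I Z Z)) \<ge> 0"
    by (rule psd_trace_op_mult_self_nonneg[OF psd \<open>hermitian_on I Z\<close>])
  ultimately show ?thesis unfolding l_def by simp
qed

lemma psd_sum_sq_le_gram:
  assumes psd: "psd_on I \<sigma>" and tr: "(\<Sum>x\<in>I. \<sigma> x x) = 1" and fin: "finite I"
    and herm: "\<forall>s\<in>S. hermitian_on I (X s)"
  shows "(\<Sum>i<D. (\<Sum>s\<in>S. T i s * Re (trace_prod I \<sigma> (X s)))\<^sup>2)
         \<le> Re (\<Sum>s\<in>S. \<Sum>t\<in>S. of_real (gram D T s t) * trace_prod I \<sigma> (op_mult I (X s) (X t)))"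
proof -
  define Y where "Y i = (\<lambda>x y. \<Sum>s\<in>S. of_real (T i s) * X s x y)" for i
  have "(\<Sum>i<D. (\<Sum>s\<in>S. T i s * Re (trace_prod I \<sigma> (X s)))\<^sup>2) = (\<Sum>i<D. (Re (trace_prod I \<sigma> (Y i)))\<^sup>2)"
    by (simp add: Y_def trace_prod_sum trace_prod_scale Re_sum)
  also have "\<dots> \<le> (\<Sum>i<D. Re (trace_prod I \<sigma> (op_mult I (Y i) (Y i))))"
    unfolding Y_def
    by (intro sum_mono trace_sq_le_trace_op_mult_self[OF psd tr _ fin] hermitian_on_lincomb herm)
  also have "\<dots> = Re (\<Sum>i<D. \<Sum>s\<in>S. \<Sum>t\<in>S. of_real (T i s * T i t) * trace_prod I \<sigma> (op_mult I (X s) (X t)))"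
    by (simp add: Y_def op_mult_lincomb trace_prod_sum trace_prod_scale Re_sum)
  also have "\<dots> = Re (\<Sum>s\<in>S. \<Sum>t\<in>S. of_real (gram D T s t) * trace_prod I \<sigma> (op_mult I (X s) (X t)))"
    unfolding gram_def of_real_sum sum_distrib_right
    by (subst sum.swap) (simp add: sum.swap[of _ "{..<D}"])
  finally show ?thesis .
qed

section \<open>Partial transposition\<close>

definition splice :: "nat set \<Rightarrow> (nat \<Rightarrow> nat) \<Rightarrow> (nat \<Rightarrow> nat) \<Rightarrow> nat \<Rightarrow> nat" where
  "splice \<tau> x y = (\<lambda>k. if k \<in> \<tau> then y k else x k)"

definition transpose_factors :: "nat set \<Rightarrow> (nat \<Rightarrow> 'i \<Rightarrow> 'i \<Rightarrow> 'a) \<Rightarrow> nat \<Rightarrow> 'i \<Rightarrow> 'i \<Rightarrow> 'a" where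
  "transpose_factors \<tau> B k a b = (if k \<in> \<tau> then B k b a else B k a b)"

lemma splice_in_mindex: "x \<in> mindex N d \<Longrightarrow> y \<in> mindex N d \<Longrightarrow> splice \<tau> x y \<in> mindex N d"
  unfolding mindex_def splice_def by (auto simp: PiE_iff extensional_def)

lemma splice_splice [simp]: "splice \<tau> (splice \<tau> x y) (splice \<tau> y x) = x"
  unfolding splice_def by auto

lemma partial_transpose_splice: "partial_transpose \<tau> \<rho> x y = \<rho> (splice \<tau> x y) (splice \<tau> y x)"
  unfolding partial_transpose_def splice_def ..

lemma tensor_op_transpose_factors_splice:
  "tensor_op N (transpose_factors \<tau> B) (splice \<tau> x y) (splice \<tau> y x) = tensor_op N B x y"
  unfolding tensor_op_def transpose_factors_def splice_def by (rule prod.cong) auto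

lemma trace_prod_partial_transpose:
  "trace_prod (mindex N d) (partial_transpose \<tau> \<rho>) (tensor_op N B)
   = trace_prod (mindex N d) \<rho> (tensor_op N (transpose_factors \<tau> B))"
proof -
  let ?X = "mindex N d"
  let ?g = "\<lambda>(x, y). (splice \<tau> x y, splice \<tau> y x)"
  have "trace_prod ?X (partial_transpose \<tau> \<rho>) (tensor_op N B)
      = (\<Sum>(x, y)\<in>?X \<times> ?X. \<rho> (splice \<tau> x y) (splice \<tau> y x) * tensor_op N B y x)"
    unfolding trace_prod_def partial_transpose_splice by (simp add: sum.cartesian_product)
  also have "\<dots> = (\<Sum>(x, y)\<in>?X \<times> ?X. \<rho> x y * tensor_op N (transpose_factors \<tau> B) y x)"
    \<comment> \<open>the splicing map is an involution of \<open>?X \<times> ?X\<close>\<close>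
    by (rule sum.reindex_bij_witness[where i = ?g and j = ?g])
       (auto simp: splice_in_mindex tensor_op_transpose_factors_splice)
  also have "\<dots> = trace_prod ?X \<rho> (tensor_op N (transpose_factors \<tau> B))"
    unfolding trace_prod_def by (simp add: sum.cartesian_product)
  finally show ?thesis .
qed

lemma trace_partial_transpose:
  "(\<Sum>x\<in>mindex N d. partial_transpose \<tau> \<rho> x x) = (\<Sum>x\<in>mindex N d. \<rho> x x)"
  by (simp add: partial_transpose_splice splice_def)

lemma hermitian_on_transpose_factors:
  assumes "hermitian_on I (B k)"
  shows "hermitian_on I (transpose_factors \<tau> B k)"
  using assms unfolding hermitian_on_def transpose_factors_def
  by (metis complex_cnj_cnj)

lemma transpose_factors_twice [simp]: "transpose_factors \<tau> (transpose_factors \<tau> B) = B"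
  by (simp add: fun_eq_iff transpose_factors_def)

lemma transpose_factors_op_mult:
  "transpose_factors \<tau> (\<lambda>k. op_mult (I k) (transpose_factors \<tau> B k) (transpose_factors \<tau> C k))
   = (\<lambda>k. if k \<in> \<tau> then op_mult (I k) (C k) (B k) else op_mult (I k) (B k) (C k))"
  by (simp add: fun_eq_iff transpose_factors_def op_mult_def mult.commute)

lemma sum_Pow_tensor_op_if:
  "(\<Sum>\<tau>\<in>Pow {..<N}. tensor_op N (\<lambda>k. if k \<in> \<tau> then F k else G k) x y)
   = tensor_op N (\<lambda>k a b. F k a b + G k a b) x y"
  unfolding tensor_op_def using prod_Pow_if[of "{..<N}" "\<lambda>k. F k (x k) (y k)" "\<lambda>k. G k (x k) (y k)"]
  by (simp add: if_distrib[of "\<lambda>B. B (x _) (y _)"])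

section \<open>The bound for states with positive partial transposes\<close>

text \<open>\<open>tr[\<rho> (A_s A_t)]\<close> for the product observables \<open>A_s\<close>, except that the factors in
  \<open>\<tau>\<close> are multiplied in reverse order; it is \<open>tr[\<rho>^{T_\<tau>} B_s B_t]\<close> for the observables
  \<open>B_s\<close> transposed on \<open>\<tau>\<close>.\<close>

definition reordered_moment ::
  "nat \<Rightarrow> (nat \<Rightarrow> nat) \<Rightarrow> (nat \<Rightarrow> nat \<Rightarrow> nat \<Rightarrow> nat \<Rightarrow> complex) \<Rightarrow> ((nat \<Rightarrow> nat) \<Rightarrow> (nat \<Rightarrow> nat) \<Rightarrow> complex)
    \<Rightarrow> nat set \<Rightarrow> (nat \<Rightarrow> nat) \<Rightarrow> (nat \<Rightarrow> nat) \<Rightarrow> complex" where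
  "reordered_moment N d A \<rho> \<tau> s t = trace_prod (mindex N d) \<rho> (tensor_op N (\<lambda>k.
     if k \<in> \<tau> then op_mult {..<d k} (A k (t k)) (A k (s k)) else op_mult {..<d k} (A k (s k)) (A k (t k))))"

lemma ppt_sum_sq_le_reordered_moments:
  assumes dens: "density_on (mindex N d) \<rho>"
    and ppt: "psd_on (mindex N d) (partial_transpose \<tau> \<rho>)"
    and herm: "\<forall>k<N. \<forall>j<M. hermitian_on {..<d k} (A k j)"
  shows "(\<Sum>i<D. (\<Sum>s\<in>mindex N (\<lambda>_. M). T i s * Re (trace_prod (mindex N d) \<rho> (tensor_op N (\<lambda>k. A k (s k)))))\<^sup>2)
      \<le> Re (\<Sum>s\<in>mindex N (\<lambda>_. M). \<Sum>t\<in>mindex N (\<lambda>_. M). of_real (gram D T s t) * reordered_moment N d A \<rho> \<tau> s t)"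
proof -
  let ?X = "mindex N d"
  let ?\<sigma> = "partial_transpose \<tau> \<rho>"
  define B where "B s = transpose_factors \<tau> (\<lambda>k. A k (s k))" for s :: "nat \<Rightarrow> nat"
  have "(\<Sum>x\<in>?X. ?\<sigma> x x) = 1"
    using dens unfolding density_on_def trace_partial_transpose by simp
  moreover have "hermitian_on ?X (tensor_op N (B s))" if "s \<in> mindex N (\<lambda>_. M)" for s
    unfolding B_def using herm mindex_lessD[OF that]
    by (intro hermitian_on_tensor_op allI impI hermitian_on_transpose_factors) simp
  ultimately have "(\<Sum>i<D. (\<Sum>s\<in>mindex N (\<lambda>_. M). T i s * Re (trace_prod ?X ?\<sigma> (tensor_op N (B s))))\<^sup>2)
      \<le> Re (\<Sum>s\<in>mindex N (\<lambda>_. M). \<Sum>t\<in>mindex N (\<lambda>_. M). of_real (gram D T s t)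
            * trace_prod ?X ?\<sigma> (op_mult ?X (tensor_op N (B s)) (tensor_op N (B t))))"
    using ppt by (intro psd_sum_sq_le_gram) auto
  moreover have "trace_prod ?X ?\<sigma> (tensor_op N (B s)) = trace_prod ?X \<rho> (tensor_op N (\<lambda>k. A k (s k)))" for s
    by (simp add: B_def trace_prod_partial_transpose)
  moreover have "trace_prod ?X ?\<sigma> (op_mult ?X (tensor_op N (B s)) (tensor_op N (B t)))
      = reordered_moment N d A \<rho> \<tau> s t" for s t
    by (simp add: B_def op_mult_tensor_op trace_prod_partial_transpose transpose_factors_op_mult
        reordered_moment_def)
  ultimately show ?thesis by simp
qed

lemma norm_preserving_sum_reordered_moments:
  assumes np: "norm_preserving N M D T"
  shows "(\<Sum>\<tau>\<in>Pow {..<N}. \<Sum>s\<in>mindex N (\<lambda>_. M). \<Sum>t\<in>mindex N (\<lambda>_. M).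
            of_real (gram D T s t) * reordered_moment N d A \<rho> \<tau> s t)
       = 2 ^ N * (\<Sum>s\<in>mindex N (\<lambda>_. M). trace_prod (mindex N d) \<rho> (tensor_op N (\<lambda>k. mat_sq (d k) (A k (s k)))))"
proof -
  let ?S = "mindex N (\<lambda>_. M)"
  let ?X = "mindex N d"
  define P where "P x y k j l = op_mult {..<d k} (A k j) (A k l) (x k) (y k)" for x y :: "nat \<Rightarrow> nat" and k j l
  have moments: "(\<Sum>\<tau>\<in>Pow {..<N}. reordered_moment N d A \<rho> \<tau> s t)
      = trace_prod ?X \<rho> (\<lambda>x y. \<Prod>k<N. P x y k (s k) (t k) + P x y k (t k) (s k))" for s t
    unfolding reordered_moment_def trace_prod_sum[symmetric] sum_Pow_tensor_op_if
    by (simp add: tensor_op_def P_def add.commute)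
  have "(\<Sum>\<tau>\<in>Pow {..<N}. \<Sum>s\<in>?S. \<Sum>t\<in>?S. of_real (gram D T s t) * reordered_moment N d A \<rho> \<tau> s t)
      = (\<Sum>s\<in>?S. \<Sum>t\<in>?S. \<Sum>\<tau>\<in>Pow {..<N}. of_real (gram D T s t) * reordered_moment N d A \<rho> \<tau> s t)"
    by (subst sum.swap) (intro sum.cong refl sum.swap)
  also have "\<dots> = (\<Sum>s\<in>?S. \<Sum>t\<in>?S. of_real (gram D T s t)
            * trace_prod ?X \<rho> (\<lambda>x y. \<Prod>k<N. P x y k (s k) (t k) + P x y k (t k) (s k)))"
    by (simp add: sum_distrib_left[symmetric] moments)
  also have "\<dots> = trace_prod ?X \<rho> (\<lambda>x y. \<Sum>s\<in>?S. \<Sum>t\<in>?S.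
            of_real (gram D T s t) * (\<Prod>k<N. P x y k (s k) (t k) + P x y k (t k) (s k)))"
    by (simp add: trace_prod_sum trace_prod_scale)
  also have "\<dots> = trace_prod ?X \<rho> (\<lambda>x y. 2 ^ N * (\<Sum>s\<in>?S. \<Prod>k<N. P x y k (s k) (s k)))"
    by (simp add: norm_preserving_gram_symmetrized[OF np])
  also have "\<dots> = 2 ^ N * (\<Sum>s\<in>?S. trace_prod ?X \<rho> (tensor_op N (\<lambda>k. mat_sq (d k) (A k (s k)))))"
    by (simp add: trace_prod_scale trace_prod_sum P_def tensor_op_def[abs_def] mat_sq_eq_op_mult)
  finally show ?thesis .
qed

theorem proposition2:
  fixes N M D :: nat
    and d :: "nat \<Rightarrow> nat"
    and T :: "nat \<Rightarrow> (nat \<Rightarrow> nat) \<Rightarrow> real"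
    and \<rho> :: "(nat \<Rightarrow> nat) \<Rightarrow> (nat \<Rightarrow> nat) \<Rightarrow> complex"
    and A :: "nat \<Rightarrow> nat \<Rightarrow> nat \<Rightarrow> nat \<Rightarrow> complex"
  assumes "norm_preserving N M D T"
    and "density_on (mindex N d) \<rho>"
    and "\<forall>\<tau>. \<tau> \<subseteq> {..<N} \<longrightarrow> psd_on (mindex N d) (partial_transpose \<tau> \<rho>)"
    and "\<forall>k<N. \<forall>j<M. hermitian_on {..<d k} (A k j)"
  shows "(\<Sum>i<D. (\<Sum>s\<in>mindex N (\<lambda>_. M).
             T i s * Re (trace_prod (mindex N d) \<rho> (tensor_op N (\<lambda>k. A k (s k)))))\<^sup>2)
         \<le> (\<Sum>s\<in>mindex N (\<lambda>_. M).
             Re (trace_prod (mindex N d) \<rho> (tensor_op N (\<lambda>k. mat_sq (d k) (A k (s k))))))"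
    (is "?L \<le> ?R")
proof -
  let ?S = "mindex N (\<lambda>_. M)"
  let ?Q = "\<lambda>\<tau>. \<Sum>s\<in>?S. \<Sum>t\<in>?S. of_real (gram D T s t) * reordered_moment N d A \<rho> \<tau> s t"
  have "2 ^ N * ?L = (\<Sum>\<tau>\<in>Pow {..<N}. ?L)"
    by (simp add: card_Pow)
  also have "\<dots> \<le> (\<Sum>\<tau>\<in>Pow {..<N}. Re (?Q \<tau>))"
    using assms(2-4) by (intro sum_mono ppt_sum_sq_le_reordered_moments) auto
  also have "\<dots> = 2 ^ N * ?R"
    using norm_preserving_sum_reordered_moments[OF assms(1), of d A \<rho>]
    by (simp flip: Re_sum)
  finally show ?thesis by simp
qed

end
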